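(* Let $G=(V,E)$ be a finite loopless graph with $V\ne\emptyset$ and edge weights $\mathbf{v}=(v_e)_{e\in E}$, and let $q,q_1,q_2$ be indeterminates. Then \[ Z_G(q_1+q_2,\mathbf{v})=\sum_{W\subseteq V}Z_{G[W]}(q_1,\mathbf{v})\,Z_{G[V\setminus W]}(q_2,\mathbf{v}). \] Moreover, for each $i\in V$, \[ \widehat{Z}_G(q_1+q_2,\mathbf{v})=\sum_{W\subseteq V,\ W\ni i}\widehat{Z}_{G[W]}(q_1,\mathbf{v})\,Z_{G[V\setminus W]}(q_2,\mathbf{v}), \] and in particular \[ Z_G(q,\mathbf{v})=\sum_{W\subseteq V,\ W\ni i}q\,C_{G[W]}(\mathbf{v})\,Z_{G[V\setminus W]}(q,\mathbf{v}). \] Also \[ |V|\,Z_G(q_2,\mathbf{v})=\sum_{\emptyset\ne W\subseteq V}\bigl[(q_1+q_2)|W|-q_1|V|\bigr]\widehat{Z}_{G[W]}(q_1,\mathbf{v})\,Z_{G[V\setminus W]}(q_2,\mathbf{v}). \]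
   Context: For a finite graph $H$: $Z_H(q,\mathbf{v})=\sum_{A\subseteq E(H)}q^{k(A)}\prod_{e\in A}v_e$ with $k(A)$ the number of connected components of $(V(H),A)$; $\widehat{Z}_H(q,\mathbf{v})=\sum_{A\subseteq E(H)}q^{k(A)-1}\prod_{e\in A}v_e$ for $V(H)\ne\emptyset$; $C_H(\mathbf{v})=\sum_{A\subseteq E(H),\,k(A)=1}\prod_{e\in A}v_e$. For the empty graph (no vertices), $Z=1$. $G[W]$ denotes the induced subgraph on $W$. *)

theory Defs
  imports Main
begin

text \<open>A finite (multi)graph is given by a vertex set V, an edge set E and an endpoint
map ends :: 'e => 'a set. Loopless: every edge has two distinct endpoints in V.\<close>

definition loopless_graph :: "'a set \<Rightarrow> 'e set \<Rightarrow> ('e \<Rightarrow> 'a set) \<Rightarrow> bool" where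
  "loopless_graph V E ends \<longleftrightarrow> finite V \<and> finite E \<and>
     (\<forall>e\<in>E. \<exists>x y. x \<in> V \<and> y \<in> V \<and> x \<noteq> y \<and> ends e = {x, y})"

definition induced_edges :: "'e set \<Rightarrow> ('e \<Rightarrow> 'a set) \<Rightarrow> 'a set \<Rightarrow> 'e set" where
  "induced_edges E ends W = {e \<in> E. ends e \<subseteq> W}"

definition adj_rel :: "'a set \<Rightarrow> ('e \<Rightarrow> 'a set) \<Rightarrow> 'e set \<Rightarrow> ('a \<times> 'a) set" where
  "adj_rel V ends A = {(x, y). x \<in> V \<and> y \<in> V \<and> (\<exists>e\<in>A. ends e = {x, y})}"

definition ncomp :: "'a set \<Rightarrow> ('e \<Rightarrow> 'a set) \<Rightarrow> 'e set \<Rightarrow> nat" where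
  "ncomp V ends A = card (V // ((adj_rel V ends A)\<^sup>*))"

definition Zpot :: "'a set \<Rightarrow> 'e set \<Rightarrow> ('e \<Rightarrow> 'a set) \<Rightarrow> 'r::comm_ring_1 \<Rightarrow> ('e \<Rightarrow> 'r) \<Rightarrow> 'r" where
  "Zpot V E ends q v = (\<Sum>A\<in>Pow E. q ^ ncomp V ends A * (\<Prod>e\<in>A. v e))"

definition Zhat :: "'a set \<Rightarrow> 'e set \<Rightarrow> ('e \<Rightarrow> 'a set) \<Rightarrow> 'r::comm_ring_1 \<Rightarrow> ('e \<Rightarrow> 'r) \<Rightarrow> 'r" where
  "Zhat V E ends q v = (\<Sum>A\<in>Pow E. q ^ (ncomp V ends A - 1) * (\<Prod>e\<in>A. v e))"

definition Cconn :: "'a set \<Rightarrow> 'e set \<Rightarrow> ('e \<Rightarrow> 'a set) \<Rightarrow> ('e \<Rightarrow> 'r::comm_ring_1) \<Rightarrow> 'r" where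
  "Cconn V E ends v = (\<Sum>A\<in>{A. A \<subseteq> E \<and> ncomp V ends A = 1}. (\<Prod>e\<in>A. v e))"

end

theory Submission
  imports Defs
begin

text \<open>Expanding each Potts factor as a sum over spanning subgraphs, the right-hand sides
become sums over triples (W, A1, A2) with A1 \<subseteq> E(G[W]) and A2 \<subseteq> E(G[V - W]).
Such a triple is the same thing as a spanning subgraph A = A1 \<union> A2 of G together with a set S
of connected components of (V, A), namely those covering W: no edge of A joins W to V - W.
For fixed A, the sum over S of q1^|S| q2^(k(A) - |S|) is (q1 + q2)^k(A) by the binomial theorem;
requiring the component of i to lie in S gives the rooted version. Setting q1 = 0 in the rooted
version yields the expansion in connected subgraphs, and the last identity follows by
double counting the pairs (i, W) with i \<in> W in the rooted version.\<close>

abbreviation reach :: "'a set \<Rightarrow> ('e \<Rightarrow> 'a set) \<Rightarrow> 'e set \<Rightarrow> ('a \<times> 'a) set" where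
  "reach V ends A \<equiv> (adj_rel V ends A)\<^sup>*"

abbreviation components :: "'a set \<Rightarrow> ('e \<Rightarrow> 'a set) \<Rightarrow> 'e set \<Rightarrow> 'a set set" where
  "components V ends A \<equiv> V // reach V ends A"

subsection \<open>Connected components\<close>

lemma adj_rel_sym: "(x, y) \<in> adj_rel V ends A \<Longrightarrow> (y, x) \<in> adj_rel V ends A"
  unfolding adj_rel_def by (auto simp: insert_commute)

lemma reach_sym: "(x, y) \<in> reach V ends A \<Longrightarrow> (y, x) \<in> reach V ends A"
  by (induction rule: rtrancl_induct)
     (auto intro: converse_rtrancl_into_rtrancl adj_rel_sym)

lemma reach_in_vertices: "(x, y) \<in> reach V ends A \<Longrightarrow> x \<in> V \<Longrightarrow> y \<in> V"
  by (induction rule: rtrancl_induct) (auto simp: adj_rel_def)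

lemma components_finite: "finite V \<Longrightarrow> finite (components V ends A)"
  unfolding quotient_def by auto

lemma component_of_vertex: "x \<in> V \<Longrightarrow> reach V ends A `` {x} \<in> components V ends A"
  unfolding quotient_def by blast

lemma component_eq:
  assumes "C \<in> components V ends A" "x \<in> C"
  shows "C = reach V ends A `` {x}"
proof -
  obtain y where C: "C = reach V ends A `` {y}" using assms(1) by (rule quotientE)
  then have "(y, x) \<in> reach V ends A" using assms(2) by blast
  with C reach_sym[OF this] show ?thesis by (auto intro: rtrancl_trans)
qed

lemma component_subset: "C \<in> components V ends A \<Longrightarrow> C \<subseteq> V"
  by (erule quotientE) (auto intro: reach_in_vertices)

lemma component_nonempty: "C \<in> components V ends A \<Longrightarrow> C \<noteq> {}"
  unfolding quotient_def by blast

lemma components_disjoint: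
  "C \<in> components V ends A \<Longrightarrow> D \<in> components V ends A \<Longrightarrow> x \<in> C \<Longrightarrow> x \<in> D \<Longrightarrow> C = D"
  using component_eq by metis

lemma vertex_in_Union_components_iff:
  assumes "S \<subseteq> components V ends A" "i \<in> V"
  shows "i \<in> \<Union>S \<longleftrightarrow> reach V ends A `` {i} \<in> S"
proof
  assume "i \<in> \<Union>S"
  then obtain C where "C \<in> S" "i \<in> C" by blast
  with assms(1) have "C = reach V ends A `` {i}" by (intro component_eq) auto
  with \<open>C \<in> S\<close> show "reach V ends A `` {i} \<in> S" by simp
qed blast

lemma ncomp_pos: "finite V \<Longrightarrow> V \<noteq> {} \<Longrightarrow> ncomp V ends A \<ge> 1"
  unfolding ncomp_def using components_finite component_of_vertex
  by (metis One_nat_def Suc_leI card_gt_0_iff empty_iff ex_in_conv)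

lemma reach_restrict_closed:
  assumes "W \<subseteq> V" and closed: "\<forall>x\<in>W. reach V ends A `` {x} \<subseteq> W" and "x \<in> W"
  shows "reach W ends A `` {x} = reach V ends A `` {x}"
proof
  have "adj_rel W ends A \<subseteq> adj_rel V ends A"
    using \<open>W \<subseteq> V\<close> unfolding adj_rel_def by auto
  then show "reach W ends A `` {x} \<subseteq> reach V ends A `` {x}"
    using rtrancl_mono by blast
next
  have "(x, y) \<in> reach W ends A" if "(x, y) \<in> reach V ends A" for y
    using that
  proof (induction rule: rtrancl_induct)
    case (step y z)
    have "y \<in> W" "z \<in> W"
      using closed \<open>x \<in> W\<close> step(1,2) by (auto intro: rtrancl_into_rtrancl)
    then have "(y, z) \<in> adj_rel W ends A"
      using step(2) unfolding adj_rel_def by auto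
    with step(3) show ?case by (rule rtrancl_into_rtrancl)
  qed simp
  then show "reach V ends A `` {x} \<subseteq> reach W ends A `` {x}" by blast
qed

lemma components_Union_components:
  assumes S: "S \<subseteq> components V ends A"
  shows "components (\<Union>S) ends A = S"
proof -
  have component: "C = reach V ends A `` {x}" if "C \<in> S" "x \<in> C" for C x
    using S that by (intro component_eq) auto
  have "\<Union>S \<subseteq> V" using S component_subset by blast
  moreover have "\<forall>x\<in>\<Union>S. reach V ends A `` {x} \<subseteq> \<Union>S"
    using component by blast
  ultimately have "components (\<Union>S) ends A = (\<lambda>x. reach V ends A `` {x}) ` \<Union>S"
    unfolding quotient_def by (auto simp: reach_restrict_closed)
  also have "\<dots> = S"
  proof
    show "(\<lambda>x. reach V ends A `` {x}) ` \<Union>S \<subseteq> S"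
      using component by blast
    show "S \<subseteq> (\<lambda>x. reach V ends A `` {x}) ` \<Union>S"
    proof
      fix C assume "C \<in> S"
      then obtain x where "x \<in> C" using S component_nonempty by blast
      with \<open>C \<in> S\<close> component show "C \<in> (\<lambda>x. reach V ends A `` {x}) ` \<Union>S" by blast
    qed
  qed
  finally show ?thesis .
qed

lemma Diff_Union_components:
  assumes S: "S \<subseteq> components V ends A"
  shows "V - \<Union>S = \<Union>(components V ends A - S)"
proof
  show "V - \<Union>S \<subseteq> \<Union>(components V ends A - S)"
  proof
    fix x assume x: "x \<in> V - \<Union>S"
    have "x \<in> reach V ends A `` {x}" by blast
    with x component_of_vertex[of x V ends A]
    show "x \<in> \<Union>(components V ends A - S)" by blast
  qed
  show "\<Union>(components V ends A - S) \<subseteq> V - \<Union>S"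
  proof
    fix x assume "x \<in> \<Union>(components V ends A - S)"
    then obtain C where C: "C \<in> components V ends A" "C \<notin> S" "x \<in> C" by blast
    have "x \<notin> D" if "D \<in> S" for D
      using C S that components_disjoint[OF C(1), of D x] by blast
    with C component_subset show "x \<in> V - \<Union>S" by blast
  qed
qed

subsection \<open>Splitting a spanning subgraph along a union of components\<close>

lemma adj_rel_Int_induced_edges:
  "A \<subseteq> E \<Longrightarrow> adj_rel W ends (A \<inter> induced_edges E ends W) = adj_rel W ends A"
  unfolding adj_rel_def induced_edges_def by auto

lemma ncomp_Union_components:
  assumes "A \<subseteq> E" "S \<subseteq> components V ends A"
  shows "ncomp (\<Union>S) ends (A \<inter> induced_edges E ends (\<Union>S)) = card S"
  unfolding ncomp_def adj_rel_Int_induced_edges[OF assms(1)]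
    components_Union_components[OF assms(2)] ..

lemma ncomp_Diff_Union_components:
  assumes "A \<subseteq> E" "S \<subseteq> components V ends A"
  shows "ncomp (V - \<Union>S) ends (A \<inter> induced_edges E ends (V - \<Union>S)) = card (components V ends A - S)"
  unfolding Diff_Union_components[OF assms(2)] by (rule ncomp_Union_components[OF assms(1)]) blast

lemma induced_edges_all_vertices: "loopless_graph V E ends \<Longrightarrow> induced_edges E ends V = E"
  unfolding loopless_graph_def induced_edges_def by auto

lemma induced_edges_empty: "loopless_graph V E ends \<Longrightarrow> induced_edges E ends {} = {}"
  unfolding loopless_graph_def induced_edges_def by auto

lemma induced_edges_Diff_disjoint:
  "loopless_graph V E ends \<Longrightarrow> induced_edges E ends W \<inter> induced_edges E ends (V - W) = {}"
  unfolding loopless_graph_def induced_edges_def by fastforce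

lemma edge_ends_in_component:
  assumes lg: "loopless_graph V E ends" and "A \<subseteq> E" "e \<in> A"
  obtains C where "C \<in> components V ends A" "ends e \<subseteq> C"
proof -
  obtain x y where xy: "x \<in> V" "y \<in> V" "ends e = {x, y}"
    using lg \<open>A \<subseteq> E\<close> \<open>e \<in> A\<close> unfolding loopless_graph_def by blast
  then have "(x, y) \<in> adj_rel V ends A"
    using \<open>e \<in> A\<close> unfolding adj_rel_def by blast
  then have "ends e \<subseteq> reach V ends A `` {x}" using xy(3) by auto
  with that component_of_vertex[OF \<open>x \<in> V\<close>] show ?thesis by blast
qed

lemma Un_Int_induced_edges_Union_components:
  assumes lg: "loopless_graph V E ends" and "A \<subseteq> E" and S: "S \<subseteq> components V ends A"
  shows "(A \<inter> induced_edges E ends (\<Union>S)) \<union> (A \<inter> induced_edges E ends (V - \<Union>S)) = A"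
proof -
  have "ends e \<subseteq> \<Union>S \<or> ends e \<subseteq> V - \<Union>S" if "e \<in> A" for e
  proof -
    obtain C where C: "C \<in> components V ends A" "ends e \<subseteq> C"
      using edge_ends_in_component[OF lg \<open>A \<subseteq> E\<close> \<open>e \<in> A\<close>] .
    show ?thesis
      using C S component_subset[OF C(1)] components_disjoint[OF C(1)] by blast
  qed
  then show ?thesis using \<open>A \<subseteq> E\<close> unfolding induced_edges_def by blast
qed

lemma prod_Int_induced_edges_Union_components:
  assumes lg: "loopless_graph V E ends" and "A \<subseteq> E" "S \<subseteq> components V ends A"
  shows "prod v (A \<inter> induced_edges E ends (\<Union>S)) * prod v (A \<inter> induced_edges E ends (V - \<Union>S))
         = prod v A"
proof -
  have "finite A" using lg \<open>A \<subseteq> E\<close> finite_subset unfolding loopless_graph_def by blast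
  then show ?thesis
    using induced_edges_Diff_disjoint[OF lg, of "\<Union>S"]
    by (subst (3) Un_Int_induced_edges_Union_components[OF assms, symmetric],
        subst prod.union_disjoint) auto
qed

text \<open>Conversely, the edges of G[W] and G[V - W] never join W to V - W, so W is a
union of components of (V, A1 \<union> A2).\<close>

lemma reach_Un_induced_edges_closed:
  assumes "A1 \<subseteq> induced_edges E ends W" "A2 \<subseteq> induced_edges E ends (V - W)"
    and "x \<in> W" "(x, z) \<in> reach V ends (A1 \<union> A2)"
  shows "z \<in> W"
  using assms(4)
proof (induction rule: rtrancl_induct)
  case (step y z)
  then obtain e where "e \<in> A1 \<union> A2" "ends e = {y, z}" unfolding adj_rel_def by auto
  with step.IH assms(1,2) show ?case unfolding induced_edges_def by auto
qed (rule \<open>x \<in> W\<close>)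

lemma Union_components_within:
  assumes "W \<subseteq> V" "A1 \<subseteq> induced_edges E ends W" "A2 \<subseteq> induced_edges E ends (V - W)"
  shows "\<Union>{C \<in> components V ends (A1 \<union> A2). C \<subseteq> W} = W"
proof
  show "W \<subseteq> \<Union>{C \<in> components V ends (A1 \<union> A2). C \<subseteq> W}"
  proof
    fix x assume "x \<in> W"
    then have "reach V ends (A1 \<union> A2) `` {x} \<subseteq> W"
      using reach_Un_induced_edges_closed[OF assms(2,3)] by blast
    with \<open>x \<in> W\<close> \<open>W \<subseteq> V\<close> component_of_vertex[of x V ends "A1 \<union> A2"]
    show "x \<in> \<Union>{C \<in> components V ends (A1 \<union> A2). C \<subseteq> W}" by blast
  qed
qed blast

lemma Un_Int_induced_edges:
  assumes lg: "loopless_graph V E ends"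
    and "A1 \<subseteq> induced_edges E ends W" "A2 \<subseteq> induced_edges E ends (V - W)"
  shows "(A1 \<union> A2) \<inter> induced_edges E ends W = A1"
    and "(A1 \<union> A2) \<inter> induced_edges E ends (V - W) = A2"
proof -
  have "ends e \<noteq> {}" if "e \<in> E" for e using lg that unfolding loopless_graph_def by auto
  then show "(A1 \<union> A2) \<inter> induced_edges E ends W = A1"
    and "(A1 \<union> A2) \<inter> induced_edges E ends (V - W) = A2"
    using assms(2,3) unfolding induced_edges_def by blast+
qed

lemma components_within_Union:
  assumes S: "S \<subseteq> components V ends A"
  shows "{C \<in> components V ends A. C \<subseteq> \<Union>S} = S"
proof
  show "{C \<in> components V ends A. C \<subseteq> \<Union>S} \<subseteq> S"
  proof clarify
    fix C assume C: "C \<in> components V ends A" "C \<subseteq> \<Union>S"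
    then obtain x where "x \<in> C" using component_nonempty by blast
    with C obtain D where "D \<in> S" "x \<in> D" by blast
    with S have "C = D" using components_disjoint[OF C(1) _ \<open>x \<in> C\<close>] by blast
    with \<open>D \<in> S\<close> show "C \<in> S" by simp
  qed
qed (use S in blast)

lemma bij_betw_component_sets_induced_pairs:
  assumes lg: "loopless_graph V E ends"
  shows "bij_betw (\<lambda>(A, S). (\<Union>S, A \<inter> induced_edges E ends (\<Union>S), A \<inter> induced_edges E ends (V - \<Union>S)))
           (SIGMA A:Pow E. Pow (components V ends A))
           (SIGMA W:Pow V. Pow (induced_edges E ends W) \<times> Pow (induced_edges E ends (V - W)))"
proof (rule bij_betw_byWitness[where f' = "\<lambda>(W, A1, A2).
         (A1 \<union> A2, {C \<in> components V ends (A1 \<union> A2). C \<subseteq> W})"], goal_cases)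
  case 1
  show ?case by (auto simp: Un_Int_induced_edges_Union_components[OF lg] components_within_Union)
next
  case 2
  show ?case by (auto simp: Union_components_within Un_Int_induced_edges[OF lg])
next
  case 3
  show ?case using component_subset by fastforce
next
  case 4
  have "induced_edges E ends W \<subseteq> E" for W unfolding induced_edges_def by blast
  then show ?case by fastforce
qed

lemma sum_induced_pairs_eq_sum_component_sets:
  assumes lg: "loopless_graph V E ends"
  shows "(\<Sum>W\<in>Pow V. \<Sum>A1\<in>Pow (induced_edges E ends W). \<Sum>A2\<in>Pow (induced_edges E ends (V - W)).
            F W A1 A2) =
         (\<Sum>A\<in>Pow E. \<Sum>S\<in>Pow (components V ends A).
            F (\<Union>S) (A \<inter> induced_edges E ends (\<Union>S)) (A \<inter> induced_edges E ends (V - \<Union>S)))"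
proof -
  have "finite V" "finite E" using lg unfolding loopless_graph_def by auto
  then have fin: "finite (induced_edges E ends W)" "finite (components V ends A)" for W A
    by (simp_all add: induced_edges_def components_finite)
  have "(\<Sum>W\<in>Pow V. \<Sum>A1\<in>Pow (induced_edges E ends W). \<Sum>A2\<in>Pow (induced_edges E ends (V - W)).
            F W A1 A2) =
        (\<Sum>(W, A1, A2)\<in>(SIGMA W:Pow V. Pow (induced_edges E ends W) \<times> Pow (induced_edges E ends (V - W))).
            F W A1 A2)"
    using \<open>finite V\<close> fin by (simp add: sum.Sigma sum.cartesian_product)
  also have "\<dots> = (\<Sum>(A, S)\<in>(SIGMA A:Pow E. Pow (components V ends A)).
            F (\<Union>S) (A \<inter> induced_edges E ends (\<Union>S)) (A \<inter> induced_edges E ends (V - \<Union>S)))"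
    by (subst sum.reindex_bij_betw[OF bij_betw_component_sets_induced_pairs[OF lg], symmetric])
       (simp add: case_prod_beta')
  also have "\<dots> = (\<Sum>A\<in>Pow E. \<Sum>S\<in>Pow (components V ends A).
            F (\<Union>S) (A \<inter> induced_edges E ends (\<Union>S)) (A \<inter> induced_edges E ends (V - \<Union>S)))"
    using \<open>finite E\<close> fin by (simp add: sum.Sigma)
  finally show ?thesis .
qed

lemma sum_induced_pairs_weighted:
  fixes v :: "'e \<Rightarrow> 'r::comm_semiring_1"
  assumes lg: "loopless_graph V E ends"
  shows "(\<Sum>W\<in>Pow V. (\<Sum>A1\<in>Pow (induced_edges E ends W). f W (ncomp W ends A1) * prod v A1) *
             (\<Sum>A2\<in>Pow (induced_edges E ends (V - W)). g (ncomp (V - W) ends A2) * prod v A2)) =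
         (\<Sum>A\<in>Pow E. (\<Sum>S\<in>Pow (components V ends A).
             f (\<Union>S) (card S) * g (card (components V ends A - S))) * prod v A)"
proof -
  have "(\<Sum>W\<in>Pow V. (\<Sum>A1\<in>Pow (induced_edges E ends W). f W (ncomp W ends A1) * prod v A1) *
             (\<Sum>A2\<in>Pow (induced_edges E ends (V - W)). g (ncomp (V - W) ends A2) * prod v A2)) =
        (\<Sum>W\<in>Pow V. \<Sum>A1\<in>Pow (induced_edges E ends W). \<Sum>A2\<in>Pow (induced_edges E ends (V - W)).
             f W (ncomp W ends A1) * g (ncomp (V - W) ends A2) * (prod v A1 * prod v A2))"
    by (simp only: sum_product) (simp add: ac_simps)
  also have "\<dots> = (\<Sum>A\<in>Pow E. \<Sum>S\<in>Pow (components V ends A).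
             f (\<Union>S) (card S) * g (card (components V ends A - S)) * prod v A)"
    unfolding sum_induced_pairs_eq_sum_component_sets[OF lg]
  proof (intro sum.cong refl)
    fix A S assume "A \<in> Pow E" "S \<in> Pow (components V ends A)"
    then have "A \<subseteq> E" "S \<subseteq> components V ends A" by auto
    then show "f (\<Union>S) (ncomp (\<Union>S) ends (A \<inter> induced_edges E ends (\<Union>S))) *
        g (ncomp (V - \<Union>S) ends (A \<inter> induced_edges E ends (V - \<Union>S))) *
        (prod v (A \<inter> induced_edges E ends (\<Union>S)) * prod v (A \<inter> induced_edges E ends (V - \<Union>S))) =
        f (\<Union>S) (card S) * g (card (components V ends A - S)) * prod v A"
      by (simp add: ncomp_Union_components ncomp_Diff_Union_components
          prod_Int_induced_edges_Union_components[OF lg])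
  qed
  also have "\<dots> = (\<Sum>A\<in>Pow E. (\<Sum>S\<in>Pow (components V ends A).
             f (\<Union>S) (card S) * g (card (components V ends A - S))) * prod v A)"
    by (simp add: sum_distrib_right)
  finally show ?thesis .
qed

subsection \<open>Binomial sums over subsets\<close>

lemma sum_Pow_power_card:
  fixes a b :: "'r::comm_semiring_1"
  assumes "finite Q"
  shows "(\<Sum>S\<in>Pow Q. a ^ card S * b ^ card (Q - S)) = (a + b) ^ card Q"
  using prod_add[OF assms, of "\<lambda>_. a" "\<lambda>_. b"] by simp

lemma sum_Pow_power_card_rooted:
  fixes a b :: "'r::comm_semiring_1"
  assumes Q: "finite Q" and "c \<in> Q"
  shows "(\<Sum>S\<in>Pow Q. if c \<in> S then a ^ (card S - 1) * b ^ card (Q - S) else 0) = (a + b) ^ (card Q - 1)"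
proof -
  \<comment> \<open>expand a product in which the root contributes 1 + 0 instead of a + b\<close>
  let ?f = "\<lambda>x. if x = c then 1 else a" and ?g = "\<lambda>x. if x = c then 0 else b"
  have "(a + b) ^ (card Q - 1) = (\<Prod>x\<in>Q. ?f x + ?g x)"
    using prod.remove[OF Q \<open>c \<in> Q\<close>, of "\<lambda>x. ?f x + ?g x"] \<open>c \<in> Q\<close>
    by (simp add: card_Diff_singleton)
  also have "\<dots> = (\<Sum>S\<in>Pow Q. (\<Prod>x\<in>S. ?f x) * (\<Prod>x\<in>Q - S. ?g x))"
    by (rule prod_add[OF Q])
  also have "\<dots> = (\<Sum>S\<in>Pow Q. if c \<in> S then a ^ (card S - 1) * b ^ card (Q - S) else 0)"
  proof (rule sum.cong[OF refl])
    fix S assume "S \<in> Pow Q"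
    then have "finite S" using Q finite_subset by blast
    show "(\<Prod>x\<in>S. ?f x) * (\<Prod>x\<in>Q - S. ?g x) =
        (if c \<in> S then a ^ (card S - 1) * b ^ card (Q - S) else 0)"
    proof (cases "c \<in> S")
      case True
      then have "(\<Prod>x\<in>Q - S. ?g x) = (\<Prod>x\<in>Q - S. b)" by (intro prod.cong) auto
      with True show ?thesis
        using prod.remove[OF \<open>finite S\<close> True, of ?f] \<open>finite S\<close> by simp
    next
      case False
      then have "(\<Prod>x\<in>Q - S. ?g x) = 0" using \<open>c \<in> Q\<close> Q by (intro prod_zero) auto
      with False show ?thesis by simp
    qed
  qed
  finally show ?thesis by simp
qed

subsection \<open>The Potts partition functions\<close>

lemma Zpot_eq_mult_Zhat:
  assumes "finite V" "V \<noteq> {}"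
  shows "Zpot V E ends q v = q * Zhat V E ends q v"
proof -
  have "q ^ ncomp V ends A = q * q ^ (ncomp V ends A - 1)" for A
    using ncomp_pos[OF assms, of ends A] by (simp flip: power_Suc)
  then show ?thesis unfolding Zpot_def Zhat_def sum_distrib_left by (simp add: mult.assoc)
qed

lemma Zhat_zero_eq_Cconn:
  fixes v :: "'e \<Rightarrow> 'r::comm_ring_1"
  assumes "finite V" "V \<noteq> {}" "finite E"
  shows "Zhat V E ends 0 v = Cconn V E ends v"
proof -
  have "(0::'r) ^ (ncomp V ends A - 1) = (if ncomp V ends A = 1 then 1 else 0)" for A
    using ncomp_pos[OF assms(1,2), of ends A] by (auto simp: power_0_left)
  then have "Zhat V E ends 0 v = (\<Sum>A\<in>Pow E. if ncomp V ends A = 1 then prod v A else 0)"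
    unfolding Zhat_def by (intro sum.cong) simp_all
  also have "\<dots> = (\<Sum>A\<in>{A \<in> Pow E. ncomp V ends A = 1}. prod v A)"
    by (rule sum.inter_filter[symmetric]) (simp add: assms(3))
  also have "\<dots> = Cconn V E ends v"
    unfolding Cconn_def by (rule sum.cong) auto
  finally show ?thesis .
qed

lemma Zpot_add_eq_sum_induced_subgraphs:
  fixes v :: "'e \<Rightarrow> 'r::comm_ring_1"
  assumes lg: "loopless_graph V E ends"
  shows "Zpot V E ends (q1 + q2) v =
    (\<Sum>W\<in>Pow V. Zpot W (induced_edges E ends W) ends q1 v *
                 Zpot (V - W) (induced_edges E ends (V - W)) ends q2 v)"
proof -
  have "finite V" using lg unfolding loopless_graph_def by simp
  have "(\<Sum>W\<in>Pow V. Zpot W (induced_edges E ends W) ends q1 v *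
                 Zpot (V - W) (induced_edges E ends (V - W)) ends q2 v) =
        (\<Sum>A\<in>Pow E. (\<Sum>S\<in>Pow (components V ends A).
             q1 ^ card S * q2 ^ card (components V ends A - S)) * prod v A)"
    unfolding Zpot_def by (rule sum_induced_pairs_weighted[OF lg, where f = "\<lambda>_ k. q1 ^ k"])
  also have "\<dots> = Zpot V E ends (q1 + q2) v"
    unfolding Zpot_def ncomp_def
    by (simp add: sum_Pow_power_card components_finite[OF \<open>finite V\<close>])
  finally show ?thesis by simp
qed

lemma Zhat_add_eq_sum_rooted_induced_subgraphs:
  fixes v :: "'e \<Rightarrow> 'r::comm_ring_1"
  assumes lg: "loopless_graph V E ends" and "i \<in> V"
  shows "Zhat V E ends (q1 + q2) v =
    (\<Sum>W\<in>{W. W \<subseteq> V \<and> i \<in> W}. Zhat W (induced_edges E ends W) ends q1 v *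
                 Zpot (V - W) (induced_edges E ends (V - W)) ends q2 v)"
proof -
  have "finite V" using lg unfolding loopless_graph_def by simp
  define f where "f W k = (if i \<in> W then q1 ^ (k - 1) else 0)" for W k
  have Zhat_rooted: "(\<Sum>A1\<in>Pow (induced_edges E ends W). f W (ncomp W ends A1) * prod v A1) =
      (if i \<in> W then Zhat W (induced_edges E ends W) ends q1 v else 0)" for W
    unfolding f_def Zhat_def by simp
  have "(\<Sum>W\<in>{W. W \<subseteq> V \<and> i \<in> W}. Zhat W (induced_edges E ends W) ends q1 v *
                 Zpot (V - W) (induced_edges E ends (V - W)) ends q2 v) =
        (\<Sum>W\<in>Pow V. (if i \<in> W then Zhat W (induced_edges E ends W) ends q1 v else 0) *
                 Zpot (V - W) (induced_edges E ends (V - W)) ends q2 v)"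
  proof -
    have "{W. W \<subseteq> V \<and> i \<in> W} = Pow V \<inter> {W. i \<in> W}" by blast
    then show ?thesis
      using \<open>finite V\<close> by (simp add: sum.inter_restrict) (rule sum.cong; simp)
  qed
  also have "\<dots> = (\<Sum>A\<in>Pow E. (\<Sum>S\<in>Pow (components V ends A).
             f (\<Union>S) (card S) * q2 ^ card (components V ends A - S)) * prod v A)"
    unfolding Zhat_rooted[symmetric] Zpot_def by (rule sum_induced_pairs_weighted[OF lg])
  also have "\<dots> = Zhat V E ends (q1 + q2) v"
    unfolding Zhat_def ncomp_def
  proof (rule sum.cong[OF refl])
    fix A
    have "(\<Sum>S\<in>Pow (components V ends A). f (\<Union>S) (card S) * q2 ^ card (components V ends A - S)) =
        (\<Sum>S\<in>Pow (components V ends A). if reach V ends A `` {i} \<in> S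
           then q1 ^ (card S - 1) * q2 ^ card (components V ends A - S) else 0)"
    proof (rule sum.cong[OF refl])
      fix S assume "S \<in> Pow (components V ends A)"
      then have "i \<in> \<Union>S \<longleftrightarrow> reach V ends A `` {i} \<in> S"
        by (intro vertex_in_Union_components_iff \<open>i \<in> V\<close>) auto
      then show "f (\<Union>S) (card S) * q2 ^ card (components V ends A - S) =
          (if reach V ends A `` {i} \<in> S
           then q1 ^ (card S - 1) * q2 ^ card (components V ends A - S) else 0)"
        unfolding f_def by simp
    qed
    also have "\<dots> = (q1 + q2) ^ (card (components V ends A) - 1)"
      by (rule sum_Pow_power_card_rooted[OF components_finite[OF \<open>finite V\<close>]
            component_of_vertex[OF \<open>i \<in> V\<close>]])
    finally show "(\<Sum>S\<in>Pow (components V ends A).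
          f (\<Union>S) (card S) * q2 ^ card (components V ends A - S)) * prod v A =
        (q1 + q2) ^ (card (components V ends A) - 1) * prod v A" by simp
  qed
  finally show ?thesis by simp
qed

lemma Zpot_eq_sum_rooted_connected_induced_subgraphs:
  fixes v :: "'e \<Rightarrow> 'r::comm_ring_1"
  assumes lg: "loopless_graph V E ends" and "i \<in> V"
  shows "Zpot V E ends q v =
    (\<Sum>W\<in>{W. W \<subseteq> V \<and> i \<in> W}. q * Cconn W (induced_edges E ends W) ends v *
                 Zpot (V - W) (induced_edges E ends (V - W)) ends q v)"
proof -
  have "finite V" "finite E" using lg unfolding loopless_graph_def by simp_all
  have "Zpot V E ends q v = q * Zhat V E ends (0 + q) v"
    using Zpot_eq_mult_Zhat[OF \<open>finite V\<close>] \<open>i \<in> V\<close> by auto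
  also have "\<dots> = q * (\<Sum>W\<in>{W. W \<subseteq> V \<and> i \<in> W}. Zhat W (induced_edges E ends W) ends 0 v *
                 Zpot (V - W) (induced_edges E ends (V - W)) ends q v)"
    by (simp only: Zhat_add_eq_sum_rooted_induced_subgraphs[OF lg \<open>i \<in> V\<close>])
  also have "\<dots> = (\<Sum>W\<in>{W. W \<subseteq> V \<and> i \<in> W}. q * Cconn W (induced_edges E ends W) ends v *
                 Zpot (V - W) (induced_edges E ends (V - W)) ends q v)"
    unfolding sum_distrib_left
  proof (rule sum.cong[OF refl])
    fix W assume "W \<in> {W. W \<subseteq> V \<and> i \<in> W}"
    then have "finite W" "W \<noteq> {}" using \<open>finite V\<close> finite_subset by auto
    moreover have "finite (induced_edges E ends W)"
      using \<open>finite E\<close> unfolding induced_edges_def by simp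
    ultimately show "q * (Zhat W (induced_edges E ends W) ends 0 v *
                 Zpot (V - W) (induced_edges E ends (V - W)) ends q v) =
        q * Cconn W (induced_edges E ends W) ends v * Zpot (V - W) (induced_edges E ends (V - W)) ends q v"
      by (simp add: Zhat_zero_eq_Cconn mult.assoc)
  qed
  finally show ?thesis .
qed

lemma sum_Pow_card_mult_eq_sum_rooted:
  fixes h :: "'a set \<Rightarrow> 'r::comm_semiring_1"
  assumes "finite V"
  shows "(\<Sum>W\<in>Pow V. of_nat (card W) * h W) = (\<Sum>i\<in>V. \<Sum>W\<in>{W. W \<subseteq> V \<and> i \<in> W}. h W)"
proof -
  have "(\<Sum>i\<in>V. \<Sum>W\<in>{W. W \<subseteq> V \<and> i \<in> W}. h W) = (\<Sum>i\<in>V. \<Sum>W\<in>{W. W \<in> Pow V \<and> i \<in> W}. h W)"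
    by simp
  also have "\<dots> = (\<Sum>W\<in>Pow V. \<Sum>i\<in>{i. i \<in> V \<and> i \<in> W}. h W)"
    using assms by (intro sum.swap_restrict) simp_all
  also have "\<dots> = (\<Sum>W\<in>Pow V. of_nat (card W) * h W)"
    by (rule sum.cong) (auto simp: Int_absorb1 Int_def[symmetric])
  finally show ?thesis by simp
qed

lemma card_mult_Zpot_eq_sum_induced_subgraphs:
  fixes v :: "'e \<Rightarrow> 'r::comm_ring_1"
  assumes lg: "loopless_graph V E ends" and "V \<noteq> {}"
  shows "of_nat (card V) * Zpot V E ends q2 v =
    (\<Sum>W\<in>{W. W \<subseteq> V \<and> W \<noteq> {}}. ((q1 + q2) * of_nat (card W) - q1 * of_nat (card V)) *
       Zhat W (induced_edges E ends W) ends q1 v * Zpot (V - W) (induced_edges E ends (V - W)) ends q2 v)"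
proof -
  have "finite V" using lg unfolding loopless_graph_def by simp
  define N where "N = {W. W \<subseteq> V \<and> W \<noteq> {}}"
  define T where "T W = Zhat W (induced_edges E ends W) ends q1 v *
    Zpot (V - W) (induced_edges E ends (V - W)) ends q2 v" for W
  have "finite N" "Pow V = insert {} N" "{} \<notin> N"
    using \<open>finite V\<close> unfolding N_def by auto
  have double_count: "of_nat (card V) * Zhat V E ends (q1 + q2) v = (\<Sum>W\<in>N. of_nat (card W) * T W)"
  proof -
    have "of_nat (card V) * Zhat V E ends (q1 + q2) v = (\<Sum>i\<in>V. Zhat V E ends (q1 + q2) v)"
      by simp
    also have "\<dots> = (\<Sum>i\<in>V. \<Sum>W\<in>{W. W \<subseteq> V \<and> i \<in> W}. T W)"
      unfolding T_def by (intro sum.cong refl Zhat_add_eq_sum_rooted_induced_subgraphs[OF lg])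
    also have "\<dots> = (\<Sum>W\<in>Pow V. of_nat (card W) * T W)"
      by (rule sum_Pow_card_mult_eq_sum_rooted[OF \<open>finite V\<close>, symmetric])
    also have "\<dots> = (\<Sum>W\<in>N. of_nat (card W) * T W)"
      using \<open>Pow V = insert {} N\<close> \<open>finite N\<close> \<open>{} \<notin> N\<close> by simp
    finally show ?thesis .
  qed
  have split_empty: "Zpot V E ends (q1 + q2) v = Zpot V E ends q2 v + q1 * (\<Sum>W\<in>N. T W)"
  proof -
    have "Zpot {} (induced_edges E ends {}) ends q1 v = 1"
      by (simp add: induced_edges_empty[OF lg] Zpot_def ncomp_def)
    moreover have "Zpot W (induced_edges E ends W) ends q1 v *
        Zpot (V - W) (induced_edges E ends (V - W)) ends q2 v = q1 * T W" if "W \<in> N" for W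
      using that \<open>finite V\<close> finite_subset unfolding N_def T_def
      by (subst Zpot_eq_mult_Zhat) (auto simp: mult.assoc)
    ultimately show ?thesis
      using \<open>Pow V = insert {} N\<close> \<open>finite N\<close> \<open>{} \<notin> N\<close>
      by (simp add: Zpot_add_eq_sum_induced_subgraphs[OF lg] induced_edges_all_vertices[OF lg]
          sum_distrib_left)
  qed
  have "(\<Sum>W\<in>N. ((q1 + q2) * of_nat (card W) - q1 * of_nat (card V)) * T W) =
      (q1 + q2) * (\<Sum>W\<in>N. of_nat (card W) * T W) - of_nat (card V) * (q1 * (\<Sum>W\<in>N. T W))"
    by (simp only: left_diff_distrib sum_subtractf sum_distrib_left) (simp add: ac_simps)
  also have "\<dots> = (q1 + q2) * (of_nat (card V) * Zhat V E ends (q1 + q2) v) -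
      of_nat (card V) * (q1 * (\<Sum>W\<in>N. T W))"
    by (simp only: double_count)
  also have "\<dots> = of_nat (card V) * (Zpot V E ends (q1 + q2) v - q1 * (\<Sum>W\<in>N. T W))"
    using Zpot_eq_mult_Zhat[OF \<open>finite V\<close> \<open>V \<noteq> {}\<close>, of E ends "q1 + q2" v]
    by (simp add: right_diff_distrib mult.left_commute)
  also have "\<dots> = of_nat (card V) * Zpot V E ends q2 v"
    by (simp add: split_empty)
  finally show ?thesis unfolding N_def T_def by (simp add: mult.assoc)
qed

theorem proposition3p7:
  fixes V :: "'a set" and E :: "'e set" and ends :: "'e \<Rightarrow> 'a set"
    and v :: "'e \<Rightarrow> 'r::comm_ring_1" and q q1 q2 :: 'r
  assumes "loopless_graph V E ends" and "V \<noteq> {}"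
  shows "(Zpot V E ends (q1 + q2) v =
           (\<Sum>W\<in>Pow V. Zpot W (induced_edges E ends W) ends q1 v *
                        Zpot (V - W) (induced_edges E ends (V - W)) ends q2 v)) \<and>
      (\<forall>i\<in>V. Zhat V E ends (q1 + q2) v =
           (\<Sum>W\<in>{W. W \<subseteq> V \<and> i \<in> W}. Zhat W (induced_edges E ends W) ends q1 v *
                        Zpot (V - W) (induced_edges E ends (V - W)) ends q2 v)) \<and>
      (\<forall>i\<in>V. Zpot V E ends q v =
           (\<Sum>W\<in>{W. W \<subseteq> V \<and> i \<in> W}. q * Cconn W (induced_edges E ends W) ends v *
                        Zpot (V - W) (induced_edges E ends (V - W)) ends q v)) \<and>
      (of_nat (card V) * Zpot V E ends q2 v =
           (\<Sum>W\<in>{W. W \<subseteq> V \<and> W \<noteq> {}}.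
              ((q1 + q2) * of_nat (card W) - q1 * of_nat (card V)) *
              Zhat W (induced_edges E ends W) ends q1 v *
              Zpot (V - W) (induced_edges E ends (V - W)) ends q2 v))"
  using Zpot_add_eq_sum_induced_subgraphs[OF assms(1)]
    Zhat_add_eq_sum_rooted_induced_subgraphs[OF assms(1)]
    Zpot_eq_sum_rooted_connected_induced_subgraphs[OF assms(1)]
    card_mult_Zpot_eq_sum_induced_subgraphs[OF assms]
  by blast

end
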